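(* Let $n=p+q\ge 2$ and let $h^1,\dots,h^n:\mathbb{R}^{p,q}\to\mathcal{C}\ell(p,q)$ be a Clifford field vector. Then for every $x\in\mathbb{R}^{p,q}$ and every $\mu=1,\dots,n$, $h^\mu(x)\in\mathcal{C}\ell_{\circledS}(p,q)$, i.e. $\pi_0(h^\mu(x))=0$, and, if $n$ is odd, also $\pi_n(h^\mu(x))=0$.
   Context: $\eta=\mathrm{diag}(1,\dots,1,-1,\dots,-1)$ ($p$ ones, $q$ minus ones). $\mathcal{C}\ell(p,q)$ is the complex Clifford algebra with identity $e$ and generators $e^1,\dots,e^n$, $e^ae^b+e^be^a=2\eta^{ab}e$, with basis $e$ and $e^{a_1\dots a_k}=e^{a_1}\cdots e^{a_k}$ ($a_1<\dots<a_k$). $\pi_k$ denotes the projection onto the span $\mathcal{C}\ell_k(p,q)$ of the basis elements with $k$ indices. $\mathrm{Tr}(U)$ is the coefficient of $e$ in $U$. The center of $\mathcal{C}\ell(p,q)$ is $\mathcal{C}\ell_0(p,q)$ for even $n$ and $\mathcal{C}\ell_0(p,q)\oplus\mathcal{C}\ell_n(p,q)$ for odd $n$; $\mathcal{C}\ell_{\circledS}(p,q)$ denotes the set of elements with zero projection onto the center. A Clifford field vector is a collection of functions $h^\mu:\mathbb{R}^{p,q}\to\mathcal{C}\ell(p,q)$, $\mu=1,\dots,n$, such that for every $x$: $h^\mu h^\nu+h^\nu h^\mu=2\eta^{\mu\nu}e$ for all $\mu,\nu$, and $\mathrm{Tr}(h^1\cdots h^n)=0$. *)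

theory Defs
  imports Complex_Main
begin

text \<open>An element is represented by its coefficient function on index sets:
  U A is the coefficient of the basis element e^{A} (A a subset of {1..n},
  the basis element being the product of the e^a, a in A, in increasing order;
  e^{} = e is the identity).\<close>

type_synonym cl = "nat set \<Rightarrow> complex"

definition eta :: "nat \<Rightarrow> nat \<Rightarrow> nat \<Rightarrow> complex" where
  "eta p a b = (if a = b then (if a \<le> p then 1 else -1) else 0)"

definition cl_elem :: "nat \<Rightarrow> cl \<Rightarrow> bool" where
  "cl_elem n U \<longleftrightarrow> (\<forall>A. \<not> A \<subseteq> {1..n} \<longrightarrow> U A = 0)"

definition cl_zero :: cl where "cl_zero = (\<lambda>A. 0)"

definition cl_one :: cl where "cl_one = (\<lambda>A. if A = {} then 1 else 0)"

definition cl_add :: "cl \<Rightarrow> cl \<Rightarrow> cl" where "cl_add U V = (\<lambda>A. U A + V A)"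

definition cl_scale :: "complex \<Rightarrow> cl \<Rightarrow> cl" where "cl_scale c U = (\<lambda>A. c * U A)"

text \<open>e^{A} e^{B} = blade_sign p A B * e^{A symdiff B}: reorder (one sign per pair a in A,
  b in B with a > b) and square the repeated generators (factor eta a a).\<close>
definition blade_sign :: "nat \<Rightarrow> nat set \<Rightarrow> nat set \<Rightarrow> complex" where
  "blade_sign p A B =
     (-1) ^ card {(a, b). a \<in> A \<and> b \<in> B \<and> b < a} * (\<Prod>a\<in>A \<inter> B. eta p a a)"

definition cl_mult :: "nat \<Rightarrow> nat \<Rightarrow> cl \<Rightarrow> cl \<Rightarrow> cl" where
  "cl_mult p q U V = (\<lambda>C. \<Sum>A\<in>Pow {1..p+q}. \<Sum>B\<in>Pow {1..p+q}.
      if (A - B) \<union> (B - A) = C then blade_sign p A B * U A * V B else 0)"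

definition cl_listprod :: "nat \<Rightarrow> nat \<Rightarrow> cl list \<Rightarrow> cl" where
  "cl_listprod p q Us = foldr (cl_mult p q) Us cl_one"

definition cl_tr :: "cl \<Rightarrow> complex" where "cl_tr U = U {}"

definition cl_proj :: "nat \<Rightarrow> nat \<Rightarrow> cl \<Rightarrow> cl" where
  "cl_proj n k U = (\<lambda>A. if A \<subseteq> {1..n} \<and> card A = k then U A else 0)"

definition pts :: "nat \<Rightarrow> (nat \<Rightarrow> real) set" where
  "pts n = {x. \<forall>i. i \<notin> {1..n} \<longrightarrow> x i = 0}"

definition clifford_field_vector :: "nat \<Rightarrow> nat \<Rightarrow> (nat \<Rightarrow> (nat \<Rightarrow> real) \<Rightarrow> cl) \<Rightarrow> bool" where
  "clifford_field_vector p q h \<longleftrightarrow>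
     (\<forall>x\<in>pts (p+q).
        (\<forall>\<mu>\<in>{1..p+q}. cl_elem (p+q) (h \<mu> x)) \<and>
        (\<forall>\<mu>\<in>{1..p+q}. \<forall>\<nu>\<in>{1..p+q}.
           cl_add (cl_mult p q (h \<mu> x) (h \<nu> x)) (cl_mult p q (h \<nu> x) (h \<mu> x))
             = cl_scale (2 * eta p \<mu> \<nu>) cl_one) \<and>
        cl_tr (cl_listprod p q (map (\<lambda>\<mu>. h \<mu> x) [1..<p+q+1])) = 0)"

end

theory Submission
  imports Defs
begin

text \<open>If a anticommutes with b and b b = c e with c \<noteq> 0, then Tr(b a b) = -c Tr(a), while
  cyclicity of the trace gives Tr(b a b) = Tr(b b a) = c Tr(a); hence Tr(a) = 0. As n \<ge> 2,
  every h^\<mu> anticommutes with some h^\<nu> whose square is \<plusminus>e, so the scalar part of h^\<mu>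
  vanishes. For odd n the pseudoscalar \<omega> = e^{1...n} is central, so h^\<mu> \<omega> still
  anticommutes with h^\<nu>, and Tr(h^\<mu> \<omega>) is a nonzero multiple of the coefficient of
  e^{1...n} in h^\<mu>.
  Associativity of the product, on which all of this rests, reduces to a cocycle
  identity for blade_sign.\<close>

lemma sym_diff_eq_empty_iff: "sym_diff A B = {} \<longleftrightarrow> A = B"
  by auto

lemma sym_diff_assoc: "sym_diff (sym_diff A B) C = sym_diff A (sym_diff B C)"
  by auto

lemma sym_diff_in_Pow: "A \<in> Pow S \<Longrightarrow> B \<in> Pow S \<Longrightarrow> sym_diff A B \<in> Pow S"
  by auto

lemma prod_sym_diff:
  fixes g :: "'a \<Rightarrow> 'b::comm_monoid_mult"
  assumes "finite A" "finite B" and involutive: "\<And>x. g x * g x = 1"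
  shows "prod g (sym_diff A B) = prod g A * prod g B"
proof -
  have A: "prod g A = prod g (A \<inter> B) * prod g (A - B)"
    using assms(1) by (rule prod.Int_Diff)
  have B: "prod g B = prod g (A \<inter> B) * prod g (B - A)"
    using assms(2) prod.Int_Diff[of B g A] by (simp add: Int_commute)
  have AB: "prod g (sym_diff A B) = prod g (A - B) * prod g (B - A)"
    using assms by (intro prod.union_disjoint) auto
  have "prod g (A \<inter> B) * prod g (A \<inter> B) = 1"
    using involutive by (simp add: prod.distrib[symmetric])
  moreover have "prod g A * prod g B
      = (prod g (A \<inter> B) * prod g (A \<inter> B)) * (prod g (A - B) * prod g (B - A))"
    unfolding A B by (simp only: mult_ac)
  ultimately show ?thesis
    using AB by simp
qed

lemma prod_if_eq_power_card:
  "finite S \<Longrightarrow> (\<Prod>x\<in>S. if P x then c else 1) = (c::'a::comm_monoid_mult) ^ card {x\<in>S. P x}"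
  by (simp add: prod.inter_filter[symmetric])

definition inversion_sign :: "nat \<Rightarrow> nat \<Rightarrow> complex" where
  "inversion_sign a b = (if b < a then -1 else 1)"

lemma inversion_sign_square: "inversion_sign a b * inversion_sign a b = 1"
  by (simp add: inversion_sign_def)

lemma eta_diag_square: "eta p a a * eta p a a = 1"
  by (simp add: eta_def)

lemma blade_sign_eq_prod:
  assumes "finite A" "finite B"
  shows "blade_sign p A B =
    (\<Prod>a\<in>A. \<Prod>b\<in>B. inversion_sign a b) * (\<Prod>a\<in>A \<inter> B. eta p a a)"
proof -
  have "(\<Prod>a\<in>A. \<Prod>b\<in>B. inversion_sign a b)
      = (\<Prod>x\<in>A \<times> B. if snd x < fst x then -1 else 1)"
    by (simp add: prod.cartesian_product inversion_sign_def case_prod_beta)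
  also have "\<dots> = (-1) ^ card {x\<in>A \<times> B. snd x < fst x}"
    using assms by (simp add: prod_if_eq_power_card)
  also have "{x\<in>A \<times> B. snd x < fst x} = {(a, b). a \<in> A \<and> b \<in> B \<and> b < a}"
    by auto
  finally show ?thesis by (simp add: blade_sign_def)
qed

lemma blade_sign_empty_left [simp]: "blade_sign p {} B = 1"
  by (simp add: blade_sign_def)

lemma blade_sign_diag_nonzero: "finite A \<Longrightarrow> blade_sign p A A \<noteq> 0"
  by (simp add: blade_sign_def eta_def)

text \<open>Both sides are products of factors that are bilinear in A, B, C for the group
  operation sym_diff, because every factor squares to 1.\<close>
lemma blade_sign_cocycle:
  assumes "finite A" "finite B" "finite C"
  shows "blade_sign p A B * blade_sign p (sym_diff A B) C
       = blade_sign p A (sym_diff B C) * blade_sign p B C"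
proof -
  have inv_left: "(\<Prod>a\<in>sym_diff A B. \<Prod>b\<in>C. inversion_sign a b)
      = (\<Prod>a\<in>A. \<Prod>b\<in>C. inversion_sign a b) * (\<Prod>a\<in>B. \<Prod>b\<in>C. inversion_sign a b)"
    by (rule prod_sym_diff)
       (use assms in \<open>auto simp: prod.distrib[symmetric] inversion_sign_square\<close>)
  have inv_right: "(\<Prod>a\<in>A. \<Prod>b\<in>sym_diff B C. inversion_sign a b)
      = (\<Prod>a\<in>A. \<Prod>b\<in>B. inversion_sign a b) * (\<Prod>a\<in>A. \<Prod>b\<in>C. inversion_sign a b)"
    by (subst prod_sym_diff) (use assms in \<open>auto simp: prod.distrib inversion_sign_square\<close>)
  have Int_sym_diff: "sym_diff A B \<inter> C = sym_diff (A \<inter> C) (B \<inter> C)"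
      "A \<inter> sym_diff B C = sym_diff (A \<inter> B) (A \<inter> C)"
    by auto
  have eta_left: "(\<Prod>a\<in>sym_diff A B \<inter> C. eta p a a)
      = (\<Prod>a\<in>A \<inter> C. eta p a a) * (\<Prod>a\<in>B \<inter> C. eta p a a)"
    unfolding Int_sym_diff by (rule prod_sym_diff) (use assms eta_diag_square in auto)
  have eta_right: "(\<Prod>a\<in>A \<inter> sym_diff B C. eta p a a)
      = (\<Prod>a\<in>A \<inter> B. eta p a a) * (\<Prod>a\<in>A \<inter> C. eta p a a)"
    unfolding Int_sym_diff by (rule prod_sym_diff) (use assms eta_diag_square in auto)
  show ?thesis
    using assms
    by (simp add: blade_sign_eq_prod inv_left inv_right eta_left eta_right
        algebra_simps)
qed

text \<open>Blades commute with the full blade in odd dimension: for a \<in> N, the inversion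
  signs of a against N in the two orders differ by (-1)^(card N - 1) = 1.\<close>
lemma blade_sign_commute_full:
  assumes "A \<subseteq> N" "finite N" "odd (card N)"
  shows "blade_sign p A N = blade_sign p N A"
proof -
  have row: "(\<Prod>b\<in>N. inversion_sign a b) = (\<Prod>b\<in>N. inversion_sign b a)" if "a \<in> N" for a
  proof -
    let ?x = "\<Prod>b\<in>N. inversion_sign a b" and ?y = "\<Prod>b\<in>N. inversion_sign b a"
    have "?x * ?y = (\<Prod>b\<in>N. if b = a then 1 else -1)"
      by (simp add: prod.distrib[symmetric] inversion_sign_def) (rule prod.cong, auto)
    also have "\<dots> = (\<Prod>b\<in>N. if b \<noteq> a then -1 else 1)"
      by (rule prod.cong) auto
    also have "\<dots> = (-1) ^ card {b\<in>N. b \<noteq> a}"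
      using assms(2) by (rule prod_if_eq_power_card)
    also have "{b\<in>N. b \<noteq> a} = N - {a}"
      by auto
    also have "(-1::complex) ^ card (N - {a}) = 1"
      using assms(2,3) that by (simp add: card_Diff_singleton)
    finally have xy: "?x * ?y = 1" .
    have yy: "?y * ?y = 1"
      by (simp add: prod.distrib[symmetric] inversion_sign_square)
    have "?x = ?x * (?y * ?y)"
      using yy by simp
    also have "\<dots> = ?y"
      using xy by (simp only: mult.assoc[symmetric]) simp
    finally show ?thesis .
  qed
  have "(\<Prod>a\<in>A. \<Prod>b\<in>N. inversion_sign a b) = (\<Prod>a\<in>A. \<Prod>b\<in>N. inversion_sign b a)"
    by (rule prod.cong[OF refl], rule row) (use assms(1) in auto)
  also have "\<dots> = (\<Prod>a\<in>N. \<Prod>b\<in>A. inversion_sign a b)"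
    by (rule prod.swap)
  moreover have "finite A"
    using assms(1,2) by (rule finite_subset)
  ultimately show ?thesis
    using assms(2) by (simp add: blade_sign_eq_prod Int_commute)
qed

lemma sum_sym_diff_collect:
  fixes f :: "'a set \<Rightarrow> complex"
  assumes "finite P" "\<And>A B. A \<in> P \<Longrightarrow> B \<in> P \<Longrightarrow> sym_diff A B \<in> P"
  shows "(\<Sum>C\<in>P. f C * (\<Sum>A\<in>P. \<Sum>B\<in>P. if sym_diff A B = C then g A B else 0))
       = (\<Sum>A\<in>P. \<Sum>B\<in>P. f (sym_diff A B) * g A B)"
proof -
  have "(\<Sum>A\<in>P. \<Sum>B\<in>P. f (sym_diff A B) * g A B)
      = (\<Sum>A\<in>P. \<Sum>B\<in>P. \<Sum>C\<in>P. if sym_diff A B = C then f C * g A B else 0)"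
    using assms by (intro sum.cong refl) simp
  also have "\<dots> = (\<Sum>C\<in>P. \<Sum>A\<in>P. \<Sum>B\<in>P. if sym_diff A B = C then f C * g A B else 0)"
    by (subst sum.swap) (intro sum.cong refl sum.swap)
  also have "\<dots> = (\<Sum>C\<in>P. f C * (\<Sum>A\<in>P. \<Sum>B\<in>P. if sym_diff A B = C then g A B else 0))"
    by (simp add: sum_distrib_left if_distrib cong: if_cong)
  finally show ?thesis ..
qed

lemma cl_mult_assoc:
  "cl_mult p q (cl_mult p q U V) W = cl_mult p q U (cl_mult p q V W)"
proof
  fix D
  let ?P = "Pow {1..p+q}" and ?s = "blade_sign p"
  have collect: "finite ?P" "\<And>A B. A \<in> ?P \<Longrightarrow> B \<in> ?P \<Longrightarrow> sym_diff A B \<in> ?P"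
    by (simp, rule sym_diff_in_Pow)
  have "cl_mult p q (cl_mult p q U V) W D
      = (\<Sum>E\<in>?P. \<Sum>C\<in>?P. (if sym_diff C E = D then ?s C E * W E else 0) * cl_mult p q U V C)"
    unfolding cl_mult_def[of p q "cl_mult p q U V" W]
    by (subst sum.swap) (intro sum.cong refl, auto)
  also have "\<dots> = (\<Sum>E\<in>?P. \<Sum>A\<in>?P. \<Sum>B\<in>?P.
      (if sym_diff (sym_diff A B) E = D then ?s (sym_diff A B) E * W E else 0) * (?s A B * U A * V B))"
    unfolding cl_mult_def[of p q U V] by (intro sum.cong refl sum_sym_diff_collect[OF collect])
  also have "\<dots> = (\<Sum>A\<in>?P. \<Sum>B\<in>?P. \<Sum>E\<in>?P.
      (if sym_diff (sym_diff A B) E = D then ?s (sym_diff A B) E * W E else 0) * (?s A B * U A * V B))"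
    by (subst sum.swap) (intro sum.cong refl sum.swap)
  also have "\<dots> = (\<Sum>A\<in>?P. \<Sum>B\<in>?P. \<Sum>E\<in>?P.
      (if sym_diff A (sym_diff B E) = D then ?s A (sym_diff B E) * U A else 0) * (?s B E * V B * W E))"
  proof (intro sum.cong refl)
    fix A B E assume "A \<in> ?P" "B \<in> ?P" "E \<in> ?P"
    then have "finite A" "finite B" "finite E"
      by (auto intro: finite_subset)
    then have "?s A B * ?s (sym_diff A B) E = ?s A (sym_diff B E) * ?s B E"
      by (rule blade_sign_cocycle)
    then show "(if sym_diff (sym_diff A B) E = D then ?s (sym_diff A B) E * W E else 0) * (?s A B * U A * V B)
      = (if sym_diff A (sym_diff B E) = D then ?s A (sym_diff B E) * U A else 0) * (?s B E * V B * W E)"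
      by (simp add: sym_diff_assoc) (metis (no_types, lifting) mult.assoc mult.commute)
  qed
  also have "\<dots> = (\<Sum>A\<in>?P. \<Sum>F\<in>?P.
      (if sym_diff A F = D then ?s A F * U A else 0) * cl_mult p q V W F)"
    by (rule sym, rule sum.cong[OF refl], subst cl_mult_def[of p q V W],
        rule sum_sym_diff_collect[OF collect])
  also have "\<dots> = cl_mult p q U (cl_mult p q V W) D"
    unfolding cl_mult_def[of p q U "cl_mult p q V W"] by (intro sum.cong refl) auto
  finally show "cl_mult p q (cl_mult p q U V) W D = cl_mult p q U (cl_mult p q V W) D" .
qed

lemma cl_mult_one_left:
  assumes "cl_elem (p+q) U"
  shows "cl_mult p q cl_one U = U"
proof
  fix C
  have row: "(\<Sum>B\<in>Pow {1..p+q}. if sym_diff A B = C then blade_sign p A B * cl_one A * U B else 0)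
     = (if A = {} then (\<Sum>B\<in>Pow {1..p+q}. if B = C then U B else 0) else 0)" for A
    unfolding cl_one_def by (cases "A = {}") (simp_all cong: if_cong)
  have "cl_mult p q cl_one U C = (\<Sum>B\<in>Pow {1..p+q}. if B = C then U B else 0)"
    unfolding cl_mult_def row by simp
  also have "\<dots> = U C"
    using assms by (auto simp: cl_elem_def)
  finally show "cl_mult p q cl_one U C = U C" .
qed

lemma cl_mult_scale_left: "cl_mult p q (cl_scale c U) V = cl_scale c (cl_mult p q U V)"
  by (rule ext) (simp add: cl_mult_def cl_scale_def sum_distrib_left mult_ac if_distrib
      cong: if_cong)

lemma cl_mult_scale_right: "cl_mult p q U (cl_scale c V) = cl_scale c (cl_mult p q U V)"
  by (rule ext) (simp add: cl_mult_def cl_scale_def sum_distrib_left mult_ac if_distrib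
      cong: if_cong)

lemma cl_elem_mult: "cl_elem (p+q) (cl_mult p q U V)"
  unfolding cl_elem_def cl_mult_def
proof (intro allI impI)
  fix C assume "\<not> C \<subseteq> {1..p+q}"
  then have "sym_diff A B \<noteq> C" if "A \<in> Pow {1..p+q}" "B \<in> Pow {1..p+q}" for A B
    using sym_diff_in_Pow[OF that] by auto
  then show "(\<Sum>A\<in>Pow {1..p+q}. \<Sum>B\<in>Pow {1..p+q}.
      if sym_diff A B = C then blade_sign p A B * U A * V B else 0) = 0"
    by simp
qed

lemma cl_tr_mult: "cl_tr (cl_mult p q U V) = (\<Sum>A\<in>Pow {1..p+q}. blade_sign p A A * U A * V A)"
  unfolding cl_tr_def cl_mult_def sym_diff_eq_empty_iff by (simp cong: if_cong)

lemma cl_tr_mult_commute: "cl_tr (cl_mult p q U V) = cl_tr (cl_mult p q V U)"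
  unfolding cl_tr_mult by (simp add: mult_ac)

lemma cl_tr_eq_0_if_anticommutes:
  assumes "cl_elem (p+q) a"
    and anticomm: "cl_mult p q a b = cl_scale (-1) (cl_mult p q b a)"
    and square: "cl_mult p q b b = cl_scale c cl_one" and "c \<noteq> 0"
  shows "cl_tr a = 0"
proof -
  let ?M = "cl_mult p q"
  have "?M (?M b a) b = cl_scale (-1) (?M (?M b b) a)"
    by (simp add: anticomm cl_mult_scale_right cl_mult_assoc)
  also have "\<dots> = cl_scale (-c) a"
    by (simp add: square cl_mult_scale_left cl_mult_one_left[OF assms(1)]) (simp add: cl_scale_def)
  finally have bab: "?M (?M b a) b = cl_scale (-c) a" .
  have bba: "?M b (?M b a) = cl_scale c a"
    by (simp add: cl_mult_assoc[symmetric] square cl_mult_scale_left cl_mult_one_left[OF assms(1)])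
  have "cl_tr (?M (?M b a) b) = cl_tr (?M b (?M b a))"
    by (rule cl_tr_mult_commute)
  then have "-c * cl_tr a = c * cl_tr a"
    unfolding bab bba by (simp add: cl_scale_def cl_tr_def)
  with \<open>c \<noteq> 0\<close> show ?thesis by simp
qed

definition cl_pseudoscalar :: "nat \<Rightarrow> cl" where
  "cl_pseudoscalar n = (\<lambda>A. if A = {1..n} then 1 else 0)"

lemma cl_tr_mult_pseudoscalar:
  "cl_tr (cl_mult p q U (cl_pseudoscalar (p+q))) = blade_sign p {1..p+q} {1..p+q} * U {1..p+q}"
  unfolding cl_tr_mult cl_pseudoscalar_def by (simp add: if_distrib cong: if_cong)

lemma cl_pseudoscalar_central:
  assumes "odd (p+q)"
  shows "cl_mult p q U (cl_pseudoscalar (p+q)) = cl_mult p q (cl_pseudoscalar (p+q)) U"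
proof
  fix C
  let ?P = "Pow {1..p+q}" and ?N = "{1..p+q}"
  have "cl_mult p q U (cl_pseudoscalar (p+q)) C = (\<Sum>A\<in>?P. \<Sum>B\<in>?P.
      if B = ?N then (if sym_diff A ?N = C then blade_sign p A ?N * U A else 0) else 0)"
    unfolding cl_mult_def cl_pseudoscalar_def by (intro sum.cong refl) auto
  also have "\<dots> = (\<Sum>A\<in>?P. if sym_diff A ?N = C then blade_sign p A ?N * U A else 0)"
    by simp
  also have "\<dots> = (\<Sum>A\<in>?P. if sym_diff ?N A = C then blade_sign p ?N A * U A else 0)"
  proof (intro sum.cong refl)
    fix A assume "A \<in> ?P"
    with assms have "blade_sign p A ?N = blade_sign p ?N A"
      by (intro blade_sign_commute_full) auto
    then show "(if sym_diff A ?N = C then blade_sign p A ?N * U A else 0)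
        = (if sym_diff ?N A = C then blade_sign p ?N A * U A else 0)"
      by (simp add: Un_commute)
  qed
  also have "\<dots> = (\<Sum>A\<in>?P. \<Sum>B\<in>?P.
      if A = ?N then (if sym_diff ?N B = C then blade_sign p ?N B * U B else 0) else 0)"
    by (subst sum.swap) simp
  also have "\<dots> = cl_mult p q (cl_pseudoscalar (p+q)) U C"
    unfolding cl_mult_def cl_pseudoscalar_def by (intro sum.cong refl) auto
  finally show "cl_mult p q U (cl_pseudoscalar (p+q)) C = cl_mult p q (cl_pseudoscalar (p+q)) U C" .
qed

lemma anticommutes_mult_pseudoscalar:
  assumes "odd (p+q)" and anticomm: "cl_mult p q a b = cl_scale (-1) (cl_mult p q b a)"
  shows "cl_mult p q (cl_mult p q a (cl_pseudoscalar (p+q))) b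
       = cl_scale (-1) (cl_mult p q b (cl_mult p q a (cl_pseudoscalar (p+q))))"
proof -
  let ?M = "cl_mult p q" and ?\<omega> = "cl_pseudoscalar (p+q)"
  have "?M (?M a ?\<omega>) b = ?M a (?M ?\<omega> b)"
    by (rule cl_mult_assoc)
  also have "\<dots> = ?M a (?M b ?\<omega>)"
    by (simp add: cl_pseudoscalar_central[OF assms(1), of b])
  also have "\<dots> = cl_scale (-1) (?M (?M b a) ?\<omega>)"
    by (simp add: cl_mult_assoc[symmetric] anticomm cl_mult_scale_left)
  also have "\<dots> = cl_scale (-1) (?M b (?M a ?\<omega>))"
    by (simp add: cl_mult_assoc)
  finally show ?thesis .
qed

lemma cl_proj_0_eq_zero_iff: "cl_proj n 0 U = cl_zero \<longleftrightarrow> cl_tr U = 0"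
proof -
  have "A \<subseteq> {1..n} \<and> card A = 0 \<longleftrightarrow> A = {}" for A :: "nat set"
    using finite_subset[of A "{1..n}"] by auto
  then show ?thesis
    by (auto simp: cl_proj_def cl_zero_def cl_tr_def fun_eq_iff)
qed

lemma cl_proj_top_eq_zero_iff: "cl_proj n n U = cl_zero \<longleftrightarrow> U {1..n} = 0"
proof -
  have "A \<subseteq> {1..n} \<and> card A = n \<longleftrightarrow> A = {1..n}" for A :: "nat set"
    using card_subset_eq[of "{1..n}" A] by auto
  then show ?thesis
    by (auto simp: cl_proj_def cl_zero_def fun_eq_iff)
qed

lemma clifford_field_vector_anticommute:
  assumes "clifford_field_vector p q h" "x \<in> pts (p+q)"
    and "\<mu> \<in> {1..p+q}" "\<nu> \<in> {1..p+q}" "\<mu> \<noteq> \<nu>"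
  shows "cl_mult p q (h \<mu> x) (h \<nu> x) = cl_scale (-1) (cl_mult p q (h \<nu> x) (h \<mu> x))"
proof
  fix C
  have "cl_add (cl_mult p q (h \<mu> x) (h \<nu> x)) (cl_mult p q (h \<nu> x) (h \<mu> x)) C
      = cl_scale (2 * eta p \<mu> \<nu>) cl_one C"
    using assms unfolding clifford_field_vector_def by simp
  then show "cl_mult p q (h \<mu> x) (h \<nu> x) C = cl_scale (-1) (cl_mult p q (h \<nu> x) (h \<mu> x)) C"
    using \<open>\<mu> \<noteq> \<nu>\<close> by (simp add: cl_add_def cl_scale_def eta_def eq_neg_iff_add_eq_0)
qed

lemma clifford_field_vector_square:
  assumes "clifford_field_vector p q h" "x \<in> pts (p+q)" "\<nu> \<in> {1..p+q}"
  shows "cl_mult p q (h \<nu> x) (h \<nu> x) = cl_scale (eta p \<nu> \<nu>) cl_one"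
proof
  fix C
  have "cl_add (cl_mult p q (h \<nu> x) (h \<nu> x)) (cl_mult p q (h \<nu> x) (h \<nu> x)) C
      = cl_scale (2 * eta p \<nu> \<nu>) cl_one C"
    using assms unfolding clifford_field_vector_def by simp
  then show "cl_mult p q (h \<nu> x) (h \<nu> x) C = cl_scale (eta p \<nu> \<nu>) cl_one C"
    by (simp add: cl_add_def cl_scale_def)
qed

theorem theorem5:
  fixes p q :: nat and h :: "nat \<Rightarrow> (nat \<Rightarrow> real) \<Rightarrow> cl"
  assumes "p + q \<ge> 2"
    and "clifford_field_vector p q h"
    and "x \<in> pts (p+q)"
    and "\<mu> \<in> {1..p+q}"
  shows "cl_proj (p+q) 0 (h \<mu> x) = cl_zero \<and>
         (odd (p+q) \<longrightarrow> cl_proj (p+q) (p+q) (h \<mu> x) = cl_zero)"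
proof -
  define \<nu> :: nat where "\<nu> = (if \<mu> = 1 then 2 else 1)"
  have \<nu>: "\<nu> \<in> {1..p+q}" "\<nu> \<noteq> \<mu>"
    using assms(1,4) by (auto simp: \<nu>_def)
  note anticomm = clifford_field_vector_anticommute[OF assms(2,3,4) \<nu>(1) \<nu>(2)[symmetric]]
  note square = clifford_field_vector_square[OF assms(2,3) \<nu>(1)]
  have nonzero: "eta p \<nu> \<nu> \<noteq> 0"
    by (simp add: eta_def)
  have elem: "cl_elem (p+q) (h \<mu> x)"
    using assms(2-4) by (simp add: clifford_field_vector_def)
  have "cl_tr (h \<mu> x) = 0"
    by (rule cl_tr_eq_0_if_anticommutes[OF elem anticomm square nonzero])
  moreover have "h \<mu> x {1..p+q} = 0" if "odd (p+q)"
  proof -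
    have "cl_tr (cl_mult p q (h \<mu> x) (cl_pseudoscalar (p+q))) = 0"
      by (rule cl_tr_eq_0_if_anticommutes[OF cl_elem_mult
            anticommutes_mult_pseudoscalar[OF that anticomm] square nonzero])
    then show ?thesis
      by (simp add: cl_tr_mult_pseudoscalar blade_sign_diag_nonzero)
  qed
  ultimately show ?thesis
    by (simp add: cl_proj_0_eq_zero_iff cl_proj_top_eq_zero_iff)
qed

end
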